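(* Let $q$ be a query program with weighted control flow graph $\langle V,E,s,t,w,\mathit{tr}\rangle$, IPET system $\mathcal{S}_{\mathrm{IPET}}$ and objective $g_{\mathrm{IPET}}$, and let $M$ be a concrete model. Let $\tau$ be the execution time of $q$ on $M$, let $$\mathit{CL}=\max_{k\vDash \mathcal{S}_{\mathrm{IPET}}} g_{\mathrm{IPET}}(k),\qquad \mathit{DS}_M=\max_{k\vDash \mathcal{S}_{\mathrm{IPET}}\cup\mathcal{S}_{\mathrm{flow}}(M)} g_{\mathrm{IPET}}(k),$$ where $\mathit{CL}$ is the classical IPET estimate and $\mathit{DS}_M$ is the domain-specific estimate with the flow facts $\mathcal{S}_{\mathrm{flow}}(M)$ derived from $M$. Then $\tau\le \mathit{DS}_M\le \mathit{CL}$.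
   Context: Linear systems. Fix a large finite reserve $\mathcal{X}$ of integer variables. A system of linear inequalities $\mathcal{S}$ is a finite set of inequalities $\sum_j a_{ij}x_j\le y_i$ (equations are written as pairs of inequalities). A valuation $k:\mathcal{X}\to\mathbb{Z}$ is a solution of $\mathcal{S}$ ($k\vDash\mathcal{S}$) if it satisfies all of them; $\mathcal{S}_1\vDash\mathcal{S}_2$ means every solution of $\mathcal{S}_1$ is a solution of $\mathcal{S}_2$. Models. A metamodel is a signature $\Sigma$ of unary class symbols, binary relation symbols, a unary existence symbol $\varepsilon$ and a binary equality symbol $\sim$. A (scoped) partial model $P=\langle O_P,I_P,\mathcal{S}_P\rangle$ consists of a finite object set $O_P$, a 3-valued interpretation $I_P(\sigma):O_P^{\mathrm{arity}(\sigma)}\to\{0,1,\tfrac12\}$ for each $\sigma\in\Sigma$ ($\tfrac12$ = unknown), and a scope $\mathcal{S}_P$ (a system of linear inequalities). $P$ is concrete if all values are $0$ or $1$, $I_P(\varepsilon)(o)=1$ for all $o$, $I_P(\sim)(o_1,o_2)=1$ iff $o_1=o_2$, and $\mathcal{S}_P$ has a solution. For a first-order predicate $\varphi$ over $\Sigma$ with free variables $v_1,\dots,v_n$ and a concrete model $M$, $M\#\varphi$ is the number of maps $Z:\{v_1,\dots,v_n\}\to O_M$ under which $\varphi$ evaluates to true in $M$ (usual 2-valued semantics). Program and IPET. $q$ is a query program generated from a graph-query search plan: structured code of nested for-loops and if-statements, where each for-loop implements an extend constraint ($C(v)$ with $v$ new, or $R(v_i,v_j)$ with $v_j$ new; it iterates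 over all candidate bindings of the new variable) and each if-statement implements a check constraint ($C(v_i)$, $R(v_i,v_j)$, $v_i=v_j$, or their negations, over already bound variables). $\mathit{BB}$ is its set of basic blocks. Its weighted CFG is $\langle V,E,s,t,w,\mathit{tr}\rangle$ with nodes $V$, edges $E\subseteq V\times V$, start/end nodes $s,t$, weights $w:E\to\mathbb{N}$ (clock cycles) and traceability map $\mathit{tr}:V\to\mathit{BB}$. Let $f:E\to\mathcal{X}$ assign distinct variables to edges. $\mathcal{S}_{\mathrm{IPET}}$ contains: $\sum_{e=\langle s,n\rangle}f(e)=1$, $\sum_{e=\langle n,t\rangle}f(e)=1$, flow conservation $\sum_{e=\langle n_1,n\rangle}f(e)-\sum_{e=\langle n,n_3\rangle}f(e)=0$ for $n\ne s,t$, $-f(e)\le 0$ for all $e$, and possibly further flow facts from low-level analysis. $g_{\mathrm{IPET}}(k)=\sum_{e\in E}w(e)\,k(f(e))$. Standing assumption (IPET safety): for every execution of $q$, following CFG path $\pi$, the valuation $k_\pi$ with $k_\pi(f(e))=\pi\#e$ (number of occurrences of $e$ in $\pi$) satisfies $\mathcal{S}_{\mathrm{IPET}}$ and the execution time is at most $g_{\mathrm{IPET}}(k_\pi)$. Basic block predicates. For $bb\in\mathit{BB}$, $\psi_{bb}$ is the conjunction of the atomic predicates of all for/if statements enclosing the source lines of $bb$ (for an extend statement, its constraint atom without the existential quantifier, so it introduces a free variable; for a check, the checked literal); $\psi_{bb}=\mathrm{true}$ if there are none. If $bb$ is the header of loop $\ell$, additionally $\psi'_{bb}=\psi_{bb}\wedge(\text{atom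 of }\ell)$. By the structure of the generated code, in the run of $q$ on a concrete $M$, executions of a non-header $bb$ correspond one-to-one to matches of $\psi_{bb}$, and executions of a loop header $bb$ correspond one-to-one to matches of $\psi_{bb}$ (loop exits) together with matches of $\psi'_{bb}$ (iterations). Flow facts. $\mathcal{S}_{\mathrm{flow}}(M)$ contains, for each $bb\in\mathit{BB}$, the equation $\sum_{e=\langle n_1,n_2\rangle\in E,\ \mathit{tr}(n_1)=bb} f(e)=M\#\psi_{bb}+M\#\psi'_{bb}$ if $bb$ is a loop header, and $\sum_{e=\langle n_1,n_2\rangle\in E,\ \mathit{tr}(n_1)=bb} f(e)=M\#\psi_{bb}$ otherwise. *)

theory Defs
  imports "HOL-Library.Extended_Real" "HOL-Library.FuncSet"
begin

text \<open>The reserve of variables is a finite type 'x. An inequality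
  sum_j a_j x_j <= y is represented by the pair (a, y).\<close>

type_synonym 'x ineq = "('x \<Rightarrow> int) \<times> int"

definition sat_ineq :: "('x::finite \<Rightarrow> int) \<Rightarrow> 'x ineq \<Rightarrow> bool" where
  "sat_ineq k i = ((\<Sum>x\<in>UNIV. fst i x * k x) \<le> snd i)"

definition solves :: "('x::finite \<Rightarrow> int) \<Rightarrow> 'x ineq set \<Rightarrow> bool" where
  "solves k S = (\<forall>i\<in>S. sat_ineq k i)"

definition eqn :: "('x \<Rightarrow> int) \<Rightarrow> int \<Rightarrow> 'x ineq set" where
  "eqn a y = {(a, y), (\<lambda>x. - a x, - y)}"

datatype tv = F | T | U   \<comment> \<open>0, 1, 1/2\<close>

record ('c, 'r, 'o, 'x) pmodel =
  objs  :: "'o set"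
  cls   :: "'c \<Rightarrow> 'o \<Rightarrow> tv"
  rel   :: "'r \<Rightarrow> 'o \<Rightarrow> 'o \<Rightarrow> tv"
  exi   :: "'o \<Rightarrow> tv"
  sim   :: "'o \<Rightarrow> 'o \<Rightarrow> tv"
  scope :: "'x ineq set"

definition concrete :: "('c, 'r, 'o, 'x::finite) pmodel \<Rightarrow> bool" where
  "concrete M \<longleftrightarrow> finite (objs M) \<and> finite (scope M)
     \<and> (\<forall>c. \<forall>a\<in>objs M. cls M c a \<noteq> U)
     \<and> (\<forall>r. \<forall>o1\<in>objs M. \<forall>o2\<in>objs M. rel M r o1 o2 \<noteq> U)
     \<and> (\<forall>a\<in>objs M. exi M a = T)
     \<and> (\<forall>o1\<in>objs M. \<forall>o2\<in>objs M. sim M o1 o2 = (if o1 = o2 then T else F))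
     \<and> (\<exists>k. solves k (scope M))"

datatype ('c, 'r, 'v) fo =
    FTrue
  | Cls 'c 'v
  | Rel 'r 'v 'v
  | Exi 'v
  | Sim 'v 'v
  | VEq 'v 'v
  | FNot "('c, 'r, 'v) fo"
  | FAnd "('c, 'r, 'v) fo" "('c, 'r, 'v) fo"
  | FOr "('c, 'r, 'v) fo" "('c, 'r, 'v) fo"
  | FEx 'v "('c, 'r, 'v) fo"
  | FAll 'v "('c, 'r, 'v) fo"

fun fv :: "('c, 'r, 'v) fo \<Rightarrow> 'v set" where
  "fv FTrue = {}"
| "fv (Cls c v) = {v}"
| "fv (Rel r v w) = {v, w}"
| "fv (Exi v) = {v}"
| "fv (Sim v w) = {v, w}"
| "fv (VEq v w) = {v, w}"
| "fv (FNot p) = fv p"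
| "fv (FAnd p q) = fv p \<union> fv q"
| "fv (FOr p q) = fv p \<union> fv q"
| "fv (FEx v p) = fv p - {v}"
| "fv (FAll v p) = fv p - {v}"

fun eval :: "('c, 'r, 'o, 'x) pmodel \<Rightarrow> ('v \<Rightarrow> 'o) \<Rightarrow> ('c, 'r, 'v) fo \<Rightarrow> bool" where
  "eval M Z FTrue = True"
| "eval M Z (Cls c v) = (cls M c (Z v) = T)"
| "eval M Z (Rel r v w) = (rel M r (Z v) (Z w) = T)"
| "eval M Z (Exi v) = (exi M (Z v) = T)"
| "eval M Z (Sim v w) = (sim M (Z v) (Z w) = T)"
| "eval M Z (VEq v w) = (Z v = Z w)"
| "eval M Z (FNot p) = (\<not> eval M Z p)"
| "eval M Z (FAnd p q) = (eval M Z p \<and> eval M Z q)"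
| "eval M Z (FOr p q) = (eval M Z p \<or> eval M Z q)"
| "eval M Z (FEx v p) = (\<exists>a\<in>objs M. eval M (Z(v := a)) p)"
| "eval M Z (FAll v p) = (\<forall>a\<in>objs M. eval M (Z(v := a)) p)"

definition count :: "('c, 'r, 'o, 'x) pmodel \<Rightarrow> ('c, 'r, 'v) fo \<Rightarrow> nat" where
  "count M p = card {Z \<in> fv p \<rightarrow>\<^sub>E objs M. eval M Z p}"

text \<open>Coefficient vector of the linear form sum over e in E of c(e) * f(e).\<close>
definition edge_coef :: "('v \<times> 'v) set \<Rightarrow> ('v \<times> 'v \<Rightarrow> 'x) \<Rightarrow> ('v \<times> 'v \<Rightarrow> int) \<Rightarrow> 'x \<Rightarrow> int" where
  "edge_coef E f c x = (\<Sum>e\<in>{e\<in>E. f e = x}. c e)"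

definition ipet_base :: "'v set \<Rightarrow> ('v \<times> 'v) set \<Rightarrow> 'v \<Rightarrow> 'v \<Rightarrow> ('v \<times> 'v \<Rightarrow> 'x) \<Rightarrow> 'x ineq set" where
  "ipet_base V E s t f =
     eqn (edge_coef E f (\<lambda>e. if fst e = s then 1 else 0)) 1
   \<union> eqn (edge_coef E f (\<lambda>e. if snd e = t then 1 else 0)) 1
   \<union> (\<Union>n\<in>V - {s, t}. eqn (edge_coef E f (\<lambda>e. (if snd e = n then 1 else 0) - (if fst e = n then 1 else 0))) 0)
   \<union> (\<Union>e\<in>E. {(edge_coef E f (\<lambda>e'. if e' = e then -1 else 0), 0)})"

definition g_ipet :: "('v \<times> 'v) set \<Rightarrow> ('v \<times> 'v \<Rightarrow> nat) \<Rightarrow> ('v \<times> 'v \<Rightarrow> 'x) \<Rightarrow> ('x \<Rightarrow> int) \<Rightarrow> int" where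
  "g_ipet E w f k = (\<Sum>e\<in>E. int (w e) * k (f e))"

text \<open>Maximum of the objective over the solutions of a system (as a supremum
  in the extended reals; it is +infinity if unbounded).\<close>
definition ipet_max :: "('v \<times> 'v) set \<Rightarrow> ('v \<times> 'v \<Rightarrow> nat) \<Rightarrow> ('v \<times> 'v \<Rightarrow> 'x::finite) \<Rightarrow> 'x ineq set \<Rightarrow> ereal" where
  "ipet_max E w f S = Sup ((\<lambda>k. ereal (real_of_int (g_ipet E w f k))) ` {k. solves k S})"

definition cfg_path :: "('v \<times> 'v) set \<Rightarrow> 'v \<Rightarrow> 'v \<Rightarrow> ('v \<times> 'v) list \<Rightarrow> bool" where
  "cfg_path E s t \<pi> \<longleftrightarrow> \<pi> \<noteq> [] \<and> set \<pi> \<subseteq> E \<and> fst (hd \<pi>) = s \<and> snd (last \<pi>) = t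
     \<and> (\<forall>i. Suc i < length \<pi> \<longrightarrow> snd (\<pi> ! i) = fst (\<pi> ! Suc i))"

definition path_val :: "('v \<times> 'v) set \<Rightarrow> ('v \<times> 'v \<Rightarrow> 'x) \<Rightarrow> ('v \<times> 'v) list \<Rightarrow> 'x \<Rightarrow> int" where
  "path_val E f \<pi> x = int (length (filter (\<lambda>e. e \<in> E \<and> f e = x) \<pi>))"

text \<open>Number of executions of basic block bb along the path pi: the number of
  visits of (non-final) CFG nodes traced to bb.\<close>
definition bb_execs :: "('v \<Rightarrow> 'bb) \<Rightarrow> ('v \<times> 'v) list \<Rightarrow> 'bb \<Rightarrow> nat" where
  "bb_execs tr \<pi> bb = length (filter (\<lambda>e. tr (fst e) = bb) \<pi>)"

text \<open>Flow facts S_flow(M).  psi bb is the basic block predicate, header bb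
  says whether bb is a loop header, and in that case psi' bb is psi bb
  conjoined with the atom of the loop.\<close>
definition flow_facts ::
  "'bb set \<Rightarrow> ('v \<times> 'v) set \<Rightarrow> ('v \<Rightarrow> 'bb) \<Rightarrow> ('v \<times> 'v \<Rightarrow> 'x)
   \<Rightarrow> ('bb \<Rightarrow> bool) \<Rightarrow> ('bb \<Rightarrow> ('c, 'r, 'var) fo) \<Rightarrow> ('bb \<Rightarrow> ('c, 'r, 'var) fo)
   \<Rightarrow> ('c, 'r, 'o, 'x) pmodel \<Rightarrow> 'x ineq set" where
  "flow_facts BB E tr f header psi psi' M =
     (\<Union>bb\<in>BB. eqn (edge_coef E f (\<lambda>e. if tr (fst e) = bb then 1 else 0))
                  (if header bb then int (count M (psi bb)) + int (count M (psi' bb))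
                   else int (count M (psi bb))))"

end

theory Submission
  imports Defs
begin

(* The valuation that counts the edges of the actual run on M satisfies S_IPET by IPET safety,
   and it satisfies S_flow(M) because each flow fact merely states that the number of executions
   of a basic block equals the corresponding match count in M.  Hence it is feasible for the
   refined system, and its objective value bounds tau from above; the refined maximum is in turn
   bounded by the classical one, since adding constraints shrinks the feasible set. *)

lemma solves_Un: "solves k (A \<union> B) \<longleftrightarrow> solves k A \<and> solves k B"
  by (auto simp: solves_def)

lemma solves_UN: "solves k (\<Union>i\<in>I. S i) \<longleftrightarrow> (\<forall>i\<in>I. solves k (S i))"
  by (auto simp: solves_def)

lemma solves_eqn: "solves k (eqn a y) \<longleftrightarrow> (\<Sum>x\<in>UNIV. a x * k x) = y"
  by (auto simp: solves_def sat_ineq_def eqn_def sum_negf)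

lemma ipet_max_upper: "solves k S \<Longrightarrow> ereal (real_of_int (g_ipet E w f k)) \<le> ipet_max E w f S"
  unfolding ipet_max_def by (rule SUP_upper) simp

lemma ipet_max_antimono: "S \<subseteq> S' \<Longrightarrow> ipet_max E w f S' \<le> ipet_max E w f S"
  unfolding ipet_max_def by (rule SUP_subset_mono) (auto simp: solves_def)

lemma sum_list_map_eq_sum_count_list:
  fixes g :: "'a \<Rightarrow> 'b::comm_semiring_1"
  assumes "finite X" "set xs \<subseteq> X"
  shows "(\<Sum>x\<leftarrow>xs. g x) = (\<Sum>x\<in>X. of_nat (count_list xs x) * g x)"
  using assms(2)
proof (induction xs)
  case (Cons a xs)
  have "(\<Sum>x\<in>X. of_nat (count_list (a # xs) x) * g x)
      = (\<Sum>x\<in>X. (if a = x then g x else 0) + of_nat (count_list xs x) * g x)"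
    by (rule sum.cong) (auto simp: algebra_simps)
  also have "\<dots> = g a + (\<Sum>x\<in>X. of_nat (count_list xs x) * g x)"
    using Cons.prems assms(1) by (simp add: sum.distrib)
  finally show ?case using Cons by simp
qed simp

lemma int_length_filter: "int (length (filter P xs)) = (\<Sum>x\<leftarrow>xs. if P x then 1 else 0)"
  by (induction xs) auto

lemma path_val_edge:
  assumes "inj_on f E" "e \<in> E"
  shows "path_val E f \<pi> (f e) = int (count_list \<pi> e)"
proof -
  have "filter (\<lambda>e'. e' \<in> E \<and> f e' = f e) \<pi> = filter ((=) e) \<pi>"
    using assms by (auto intro: filter_cong dest: inj_onD)
  then show ?thesis by (simp add: path_val_def count_list_eq_length_filter)
qed

lemma edge_coef_path_val:
  fixes f :: "'v \<times> 'v \<Rightarrow> 'x::finite"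
  assumes "finite E" "inj_on f E" "set \<pi> \<subseteq> E"
  shows "(\<Sum>x\<in>UNIV. edge_coef E f c x * path_val E f \<pi> x) = (\<Sum>e\<leftarrow>\<pi>. c e)"
proof -
  have "(\<Sum>x\<in>UNIV. edge_coef E f c x * path_val E f \<pi> x)
      = (\<Sum>x\<in>UNIV. \<Sum>e\<in>{e\<in>E. f e = x}. c e * path_val E f \<pi> (f e))"
    unfolding edge_coef_def by (simp add: sum_distrib_right)
  also have "\<dots> = (\<Sum>e\<in>E. c e * path_val E f \<pi> (f e))"
    by (rule sum.group) (use assms(1) in auto)
  also have "\<dots> = (\<Sum>e\<in>E. of_nat (count_list \<pi> e) * c e)"
    using assms(2) by (simp add: path_val_edge mult.commute)
  also have "\<dots> = (\<Sum>e\<leftarrow>\<pi>. c e)"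
    by (simp add: sum_list_map_eq_sum_count_list[OF assms(1,3)])
  finally show ?thesis .
qed

lemma path_val_solves_flow_facts:
  assumes "finite E" "inj_on f E" "set \<pi> \<subseteq> E"
    and execs: "\<And>bb. bb \<in> BB \<Longrightarrow> bb_execs tr \<pi> bb =
        (if header bb then count M (psi bb) + count M (psi' bb) else count M (psi bb))"
  shows "solves (path_val E f \<pi>) (flow_facts BB E tr f header psi psi' M)"
  unfolding flow_facts_def solves_UN solves_eqn
proof
  fix bb assume "bb \<in> BB"
  have "(\<Sum>x\<in>UNIV. edge_coef E f (\<lambda>e. if tr (fst e) = bb then 1 else 0) x * path_val E f \<pi> x)
      = int (bb_execs tr \<pi> bb)"
    by (simp add: edge_coef_path_val[OF assms(1-3)] bb_execs_def int_length_filter)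
  with execs[OF \<open>bb \<in> BB\<close>]
  show "(\<Sum>x\<in>UNIV. edge_coef E f (\<lambda>e. if tr (fst e) = bb then 1 else 0) x * path_val E f \<pi> x)
      = (if header bb then int (count M (psi bb)) + int (count M (psi' bb))
         else int (count M (psi bb)))"
    by simp
qed

theorem proposition5p3:
  fixes V :: "'v set" and E :: "('v \<times> 'v) set" and s t :: 'v
    and w :: "'v \<times> 'v \<Rightarrow> nat" and BB :: "'bb set" and tr :: "'v \<Rightarrow> 'bb"
    and f :: "'v \<times> 'v \<Rightarrow> 'x::finite"
    and S_extra :: "'x ineq set"
    and header :: "'bb \<Rightarrow> bool"
    and psi :: "'bb \<Rightarrow> ('c, 'r, 'var) fo" and loop_atom :: "'bb \<Rightarrow> ('c, 'r, 'var) fo"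
    and run :: "('c, 'r, 'o, 'x) pmodel \<Rightarrow> ('v \<times> 'v) list \<Rightarrow> real \<Rightarrow> bool"
    and M :: "('c, 'r, 'o, 'x) pmodel" and \<pi> :: "('v \<times> 'v) list" and \<tau> :: real
  defines "S_IPET \<equiv> ipet_base V E s t f \<union> S_extra"
    and "psi' \<equiv> (\<lambda>bb. FAnd (psi bb) (loop_atom bb))"
  assumes V_fin: "finite V" and E_sub: "E \<subseteq> V \<times> V" and st: "s \<in> V" "t \<in> V"
    and BB_fin: "finite BB" and tr_into: "tr ` V \<subseteq> BB"
    and f_inj: "inj_on f E"
    and extra_fin: "finite S_extra"
    \<comment> \<open>every run of q follows a CFG path from s to t\<close>
    and run_path: "\<And>M' \<pi>' \<tau>'. run M' \<pi>' \<tau>' \<Longrightarrow> cfg_path E s t \<pi>'"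
    \<comment> \<open>standing assumption: IPET safety\<close>
    and ipet_safe: "\<And>M' \<pi>' \<tau>'. run M' \<pi>' \<tau>' \<Longrightarrow>
        solves (path_val E f \<pi>') S_IPET \<and> \<tau>' \<le> real_of_int (g_ipet E w f (path_val E f \<pi>'))"
    \<comment> \<open>structure of the generated code: executions of bb correspond one-to-one to matches\<close>
    and code_struct: "\<And>M' \<pi>' \<tau>' bb. concrete M' \<Longrightarrow> run M' \<pi>' \<tau>' \<Longrightarrow> bb \<in> BB \<Longrightarrow>
        bb_execs tr \<pi>' bb =
          (if header bb then count M' (psi bb) + count M' (psi' bb) else count M' (psi bb))"
    and M_conc: "concrete M"
    \<comment> \<open>tau is the execution time of q on M, whose run follows pi\<close>
    and run_M: "run M \<pi> \<tau>"
  shows "ereal \<tau> \<le> ipet_max E w f (S_IPET \<union> flow_facts BB E tr f header psi psi' M)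
       \<and> ipet_max E w f (S_IPET \<union> flow_facts BB E tr f header psi psi' M) \<le> ipet_max E w f S_IPET"
proof
  let ?S_flow = "flow_facts BB E tr f header psi psi' M"
  have "finite E" using V_fin E_sub finite_subset by blast
  moreover have "set \<pi> \<subseteq> E" using run_path[OF run_M] by (simp add: cfg_path_def)
  ultimately have "solves (path_val E f \<pi>) ?S_flow"
    using path_val_solves_flow_facts f_inj code_struct[OF M_conc run_M] by blast
  with ipet_safe[OF run_M] have "solves (path_val E f \<pi>) (S_IPET \<union> ?S_flow)"
    and "\<tau> \<le> real_of_int (g_ipet E w f (path_val E f \<pi>))"
    by (simp_all add: solves_Un)
  then show "ereal \<tau> \<le> ipet_max E w f (S_IPET \<union> ?S_flow)"
    using ipet_max_upper order_trans ereal_less_eq(3) by blast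
  show "ipet_max E w f (S_IPET \<union> ?S_flow) \<le> ipet_max E w f S_IPET"
    by (rule ipet_max_antimono) simp
qed

end
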